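(* Let $\mathcal{A}$ be a central and essential arrangement in $\mathbb{Q}^l$ as in the context, with $\lcm$-period $\rho_0$ and constant $q_0$. If $p$ is a prime with $p>q_0$ and $p$ coprime to $\rho_0$, then $\mathcal{A}$ and $\mathcal{A}_p$ are combinatorially equivalent.
   Context: $\mathcal{A}=\{H_1,\dots,H_n\}$: $n$ distinct linear hyperplanes in $\mathbb{Q}^l$ with $\bigcap H_i=\{0\}$, $H_i=\{\alpha_i=0\}$, $\alpha_i=\sum_{k=1}^lc_{ki}x_k$ with $c_{ki}\in\mathbb{Z}$ not all divisible by any prime. $\mathcal{A}_p$ is the family of $n$ hyperplanes $\{(\alpha_i)_p=0\}$ in $\mathbb{F}_p^l$, where $(\alpha_i)_p$ is the reduction mod $p$. Let $C=(c_{ki})\in\mathrm{Mat}_{l\times n}(\mathbb{Z})$ with columns $c_1,\dots,c_n$, and for nonempty $J=\{i_1<\dots<i_k\}\subseteq[n]$ let $C_J=(c_{i_1},\dots,c_{i_k})$. There are unimodular $S_J\in\mathrm{Mat}_{l\times l}(\mathbb{Z})$, $T_J\in\mathrm{Mat}_{k\times k}(\mathbb{Z})$ with $S_JC_JT_J$ equal to the Smith normal form, having diagonal block $\mathrm{diag}(e_{J,1},\dots,e_{J,r})$, $e_{J,i}>0$, $e_{J,1}\mid\dots\mid e_{J,r}$, $r=\mathrm{rk}(C_J)$, and zeros elsewhere; set $e(J)=e_{J,r}$. The $\lcm$-period is $\rho_0=\lcm\{e(J): J\subseteq[n],\ 1\le|J|\le l\}$. Further $q_0=\max_{\emptyset\ne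 J\subseteq[n]}\min_{S_J}\max\{|u| : u \text{ an entry of } S_JC_J \text{ or } C_J\}$, the minimum over all such unimodular $S_J$. Two indexed families $\{H^{(1)}_i\}$ in $K_1^l$, $\{H^{(2)}_i\}$ in $K_2^l$ are combinatorially equivalent if $\dim(H^{(1)}_{i_1}\cap\dots\cap H^{(1)}_{i_k})=\dim(H^{(2)}_{i_1}\cap\dots\cap H^{(2)}_{i_k})$ for all $i_1<\dots<i_k$. *)

theory Defs
  imports "Jordan_Normal_Form.VS_Connect" "Berlekamp_Zassenhaus.Finite_Field"
begin

text \<open>The arrangement is encoded by the integer coefficient matrix C (l x n);
  column i holds the coefficients c_{1i},...,c_{li} of the linear form alpha_i.
  Over a field 'a the form alpha_i is evaluated via the canonical map of_int : int -> 'a;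
  for 'a = rat this is alpha_i itself, for 'a = 'p mod_ring it is the reduction mod p.\<close>

definition lin_form :: "int mat \<Rightarrow> nat \<Rightarrow> 'a::comm_ring_1 vec \<Rightarrow> 'a" where
  "lin_form C i x = (\<Sum>k<dim_row C. of_int (C $$ (k, i)) * x $ k)"

definition hyperplane :: "int mat \<Rightarrow> nat \<Rightarrow> 'a::field vec set" where
  "hyperplane C i = {x \<in> carrier_vec (dim_row C). lin_form C i x = 0}"

definition subspace_dim :: "nat \<Rightarrow> 'a::field vec set \<Rightarrow> nat" where
  "subspace_dim l W = vectorspace.dim class_ring ((module_vec TYPE('a) l)\<lparr>carrier := W\<rparr>)"

definition comb_equiv :: "nat \<Rightarrow> nat \<Rightarrow> (nat \<Rightarrow> 'a::field vec set) \<Rightarrow> (nat \<Rightarrow> 'b::field vec set) \<Rightarrow> bool" where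
  "comb_equiv l n H1 H2 \<longleftrightarrow>
     (\<forall>J. J \<subseteq> {..<n} \<and> J \<noteq> {} \<longrightarrow>
        subspace_dim l (\<Inter>i\<in>J. H1 i) = subspace_dim l (\<Inter>i\<in>J. H2 i))"

definition sub_cols :: "int mat \<Rightarrow> nat set \<Rightarrow> int mat" where
  "sub_cols C J = mat (dim_row C) (card J) (\<lambda>(r, j). C $$ (r, sorted_list_of_set J ! j))"

definition unimodular :: "nat \<Rightarrow> int mat \<Rightarrow> bool" where
  "unimodular k S \<longleftrightarrow> S \<in> carrier_mat k k \<and> (det S = 1 \<or> det S = -1)"

definition is_snf :: "int mat \<Rightarrow> nat \<Rightarrow> bool" where
  "is_snf D r \<longleftrightarrow> r \<le> min (dim_row D) (dim_col D) \<and>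
     (\<forall>i<dim_row D. \<forall>j<dim_col D. (i \<noteq> j \<or> r \<le> i) \<longrightarrow> D $$ (i, j) = 0) \<and>
     (\<forall>i<r. D $$ (i, i) > 0) \<and>
     (\<forall>i. Suc i < r \<longrightarrow> D $$ (i, i) dvd D $$ (Suc i, Suc i))"

definition snf_decomp :: "int mat \<Rightarrow> int mat \<Rightarrow> int mat \<Rightarrow> nat \<Rightarrow> bool" where
  "snf_decomp M S T r \<longleftrightarrow> unimodular (dim_row M) S \<and> unimodular (dim_col M) T \<and>
     is_snf (S * M * T) r"

definition eJ :: "int mat \<Rightarrow> nat set \<Rightarrow> int" where
  "eJ C J = (SOME e. \<exists>S T r. snf_decomp (sub_cols C J) S T r \<and> 0 < r \<and>
                        e = (S * sub_cols C J * T) $$ (r - 1, r - 1))"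

definition rho0 :: "int mat \<Rightarrow> int" where
  "rho0 C = Lcm {eJ C J | J. J \<subseteq> {..<dim_col C} \<and> 1 \<le> card J \<and> card J \<le> dim_row C}"

definition max_abs_entry :: "int mat \<Rightarrow> nat" where
  "max_abs_entry M = Max (insert 0 {nat \<bar>M $$ (i, j)\<bar> | i j. i < dim_row M \<and> j < dim_col M})"

definition q0 :: "int mat \<Rightarrow> nat" where
  "q0 C = Max (insert 0
     {(INF S\<in>{S. \<exists>T r. snf_decomp (sub_cols C J) S T r}.
          max (max_abs_entry (S * sub_cols C J)) (max_abs_entry (sub_cols C J)))
      | J. J \<subseteq> {..<dim_col C} \<and> J \<noteq> {}})"

end

theory Submission
  imports Defs "Jordan_Normal_Form.Matrix_Kernel" "Jordan_Normal_Form.Column_Operations"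
begin

text \<open>Over any field \<open>K\<close> the flat \<open>X\<^sub>J\<close>, the intersection of the \<open>H\<^sub>i\<close> with \<open>i \<in> J\<close>, is the left kernel of
  the reduction of \<open>C\<^sub>J\<close>. Writing \<open>S C\<^sub>J T = D\<close> in Smith normal form, its dimension is
  \<open>l\<close> minus the number of diagonal entries of \<open>D\<close> that are nonzero in \<open>K\<close>: this is
  \<open>l - rk C\<^sub>J\<close> over \<open>\<rat>\<close> and at least that over \<open>\<bbbF>\<^sub>p\<close>. Conversely, replace \<open>J\<close> by an
  irredundant \<open>J' \<subseteq> J\<close> with the same rational flat. Then \<open>|J'| \<le> l\<close>, so \<open>e(J')\<close> divides
  \<open>\<rho>\<^sub>0\<close> and is a unit mod \<open>p\<close>; as all invariant factors of \<open>C\<^sub>J\<^sub>'\<close> divide \<open>e(J')\<close>, none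
  vanishes mod \<open>p\<close>, and \<open>dim\<^sub>p X\<^sub>J \<le> dim\<^sub>p X\<^sub>J\<^sub>' = dim\<^sub>\<rat> X\<^sub>J\<^sub>' = dim\<^sub>\<rat> X\<^sub>J\<close>.\<close>

section \<open>Smith normal form over the integers\<close>

definition unimod_equiv :: "int mat \<Rightarrow> int mat \<Rightarrow> bool" where
  "unimod_equiv M N \<longleftrightarrow>
     (\<exists>S T. unimodular (dim_row M) S \<and> unimodular (dim_col M) T \<and> N = S * M * T)"

lemma unimodular_one_mat: "unimodular n (1\<^sub>m n)"
  by (simp add: unimodular_def)

lemma unimodular_mult: "unimodular n A \<Longrightarrow> unimodular n B \<Longrightarrow> unimodular n (A * B)"
  unfolding unimodular_def using det_mult[of A n B] by auto

lemma unimodular_addrow_mat: "k \<noteq> l \<Longrightarrow> unimodular n (addrow_mat n a k l)"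
  by (simp add: unimodular_def det_addrow_mat)

lemma unimodular_swaprows_mat:
  assumes "k < n" "l < n"
  shows "unimodular n (swaprows_mat n k l)"
proof (cases "k = l")
  case True
  then have "swaprows_mat n k l = (1\<^sub>m n :: int mat)"
    by (intro eq_matI) (auto simp: swaprows_mat_def)
  then show ?thesis by (simp add: unimodular_one_mat)
next
  case False
  then show ?thesis using assms by (simp add: unimodular_def det_swaprows_mat)
qed

lemma unimodular_multrow_mat_neg_one: "k < n \<Longrightarrow> unimodular n (multrow_mat n k (-1))"
  by (simp add: unimodular_def det_multrow_mat)

lemma unimod_equiv_dims: "unimod_equiv M N \<Longrightarrow> dim_row N = dim_row M \<and> dim_col N = dim_col M"
  by (auto simp: unimod_equiv_def unimodular_def)

lemma unimod_equiv_mult_left: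
  assumes "unimodular (dim_row M) U"
  shows "unimod_equiv M (U * M)"
proof -
  have "U * M \<in> carrier_mat (dim_row M) (dim_col M)"
    using assms by (auto simp: unimodular_def)
  then have "U * M * 1\<^sub>m (dim_col M) = U * M" by (rule right_mult_one_mat)
  then show ?thesis unfolding unimod_equiv_def using assms unimodular_one_mat by metis
qed

lemma unimod_equiv_mult_right:
  assumes "unimodular (dim_col M) V"
  shows "unimod_equiv M (M * V)"
proof -
  have "1\<^sub>m (dim_row M) * M = M" by (rule left_mult_one_mat) (rule carrier_matI, auto)
  then have "1\<^sub>m (dim_row M) * M * V = M * V" by simp
  then show ?thesis unfolding unimod_equiv_def using assms unimodular_one_mat by metis
qed

lemma unimod_equiv_refl: "unimod_equiv M M"
  using unimod_equiv_mult_left[OF unimodular_one_mat] by simp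

lemma unimod_equiv_trans:
  assumes "unimod_equiv M N" "unimod_equiv N P"
  shows "unimod_equiv M P"
proof -
  obtain S T where S: "unimodular (dim_row M) S" and T: "unimodular (dim_col M) T"
    and N: "N = S * M * T" using assms(1) unfolding unimod_equiv_def by blast
  obtain S' T' where S': "unimodular (dim_row M) S'" and T': "unimodular (dim_col M) T'"
    and P: "P = S' * N * T'" using assms(2) unimod_equiv_dims[OF assms(1)]
    unfolding unimod_equiv_def by auto
  have M: "M \<in> carrier_mat (dim_row M) (dim_col M)" by auto
  have cS: "S \<in> carrier_mat (dim_row M) (dim_row M)" "S' \<in> carrier_mat (dim_row M) (dim_row M)"
    and cT: "T \<in> carrier_mat (dim_col M) (dim_col M)" "T' \<in> carrier_mat (dim_col M) (dim_col M)"
    using S S' T T' unfolding unimodular_def by blast+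
  have SM: "S * M \<in> carrier_mat (dim_row M) (dim_col M)" using cS(1) M by (rule mult_carrier_mat)
  have "(S' * S) * M * (T * T') = S' * (S * M) * T * T'"
    using assoc_mult_mat[OF cS(2,1) M] assoc_mult_mat[OF mult_carrier_mat[OF cS(2) SM] cT]
    by simp
  also have "\<dots> = P"
    unfolding P N using assoc_mult_mat[OF cS(2) SM cT(1)] by simp
  finally have "P = (S' * S) * M * (T * T')" ..
  then show ?thesis
    unfolding unimod_equiv_def using unimodular_mult[OF S' S] unimodular_mult[OF T T'] by blast
qed

lemma unimod_equiv_addrow: "k \<noteq> l \<Longrightarrow> l < dim_row M \<Longrightarrow> unimod_equiv M (addrow a k l M)"
  using addrow_mat[of M "dim_row M" "dim_col M" l a k]
  by (simp add: unimod_equiv_mult_left unimodular_addrow_mat)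

lemma unimod_equiv_swaprows:
  "k < dim_row M \<Longrightarrow> l < dim_row M \<Longrightarrow> unimod_equiv M (swaprows k l M)"
  using swaprows_mat[of M "dim_row M" "dim_col M" k l]
  by (simp add: unimod_equiv_mult_left unimodular_swaprows_mat)

lemma unimod_equiv_multrow_neg_one: "k < dim_row M \<Longrightarrow> unimod_equiv M (multrow k (-1) M)"
  using multrow_mat[of M "dim_row M" "dim_col M" k "-1"]
  by (simp add: unimod_equiv_mult_left unimodular_multrow_mat_neg_one)

lemma unimod_equiv_addcol: "k \<noteq> l \<Longrightarrow> l < dim_col M \<Longrightarrow> unimod_equiv M (addcol a k l M)"
  using addcol_mat[of M "dim_row M" "dim_col M" l a k]
  by (simp add: unimod_equiv_mult_right unimodular_addrow_mat)

lemma unimod_equiv_swapcols: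
  "k < dim_col M \<Longrightarrow> l < dim_col M \<Longrightarrow> unimod_equiv M (swapcols k l M)"
  using swapcols_mat[of M "dim_row M" "dim_col M" k l]
  by (simp add: unimod_equiv_mult_right unimodular_swaprows_mat)

text \<open>Invariant of the Smith normal form algorithm after \<open>t\<close> pivot steps.\<close>

definition partial_snf :: "nat \<Rightarrow> int mat \<Rightarrow> bool" where
  "partial_snf t N \<longleftrightarrow> t \<le> dim_row N \<and> t \<le> dim_col N \<and>
     (\<forall>i<dim_row N. \<forall>j<dim_col N. (i < t \<or> j < t) \<and> i \<noteq> j \<longrightarrow> N $$ (i,j) = 0) \<and>
     (\<forall>i<t. N $$ (i,i) > 0) \<and>
     (\<forall>i. Suc i < t \<longrightarrow> N $$ (i,i) dvd N $$ (Suc i, Suc i)) \<and>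
     (0 < t \<longrightarrow> (\<forall>i<dim_row N. \<forall>j<dim_col N.
        t \<le> i \<and> t \<le> j \<longrightarrow> N $$ (t-1,t-1) dvd N $$ (i,j)))"

lemma partial_snf_addrow:
  "partial_snf t N \<Longrightarrow> t \<le> k \<Longrightarrow> t \<le> l \<Longrightarrow> k < dim_row N \<Longrightarrow> l < dim_row N \<Longrightarrow>
   partial_snf t (addrow a k l N)"
  unfolding partial_snf_def by auto

lemma partial_snf_swaprows:
  "partial_snf t N \<Longrightarrow> t \<le> k \<Longrightarrow> t \<le> l \<Longrightarrow> k < dim_row N \<Longrightarrow> l < dim_row N \<Longrightarrow>
   partial_snf t (swaprows k l N)"
  unfolding partial_snf_def by auto

lemma partial_snf_multrow:
  "partial_snf t N \<Longrightarrow> t \<le> k \<Longrightarrow> k < dim_row N \<Longrightarrow> partial_snf t (multrow k a N)"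
  unfolding partial_snf_def by auto

lemma partial_snf_addcol:
  "partial_snf t N \<Longrightarrow> t \<le> k \<Longrightarrow> t \<le> l \<Longrightarrow> k < dim_col N \<Longrightarrow> l < dim_col N \<Longrightarrow>
   partial_snf t (addcol a k l N)"
  unfolding partial_snf_def by auto

lemma partial_snf_swapcols:
  "partial_snf t N \<Longrightarrow> t \<le> k \<Longrightarrow> t \<le> l \<Longrightarrow> k < dim_col N \<Longrightarrow> l < dim_col N \<Longrightarrow>
   partial_snf t (swapcols k l N)"
  unfolding partial_snf_def by auto

lemma partial_snf_Suc:
  assumes partial: "partial_snf t N" and t: "t < dim_row N" "t < dim_col N"
    and pos: "0 < N $$ (t,t)"
    and col: "\<And>i. t < i \<Longrightarrow> i < dim_row N \<Longrightarrow> N $$ (i,t) = 0"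
    and row: "\<And>j. t < j \<Longrightarrow> j < dim_col N \<Longrightarrow> N $$ (t,j) = 0"
    and dvd: "\<And>i j. t < i \<Longrightarrow> i < dim_row N \<Longrightarrow> t < j \<Longrightarrow> j < dim_col N \<Longrightarrow>
      N $$ (t,t) dvd N $$ (i,j)"
  shows "partial_snf (Suc t) N"
proof -
  have "N $$ (i,j) = 0"
    if "i < dim_row N" "j < dim_col N" "i < Suc t \<or> j < Suc t" "i \<noteq> j" for i j
    using partial that col row unfolding partial_snf_def
    by (metis less_SucE nat_neq_iff)
  moreover have "N $$ (i,i) dvd N $$ (Suc i, Suc i)" if "Suc i < Suc t" for i
  proof (cases "Suc i < t")
    case False
    then have "i = t - 1" "Suc i = t" using that by auto
    then show ?thesis using partial t unfolding partial_snf_def by auto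
  qed (use partial in \<open>auto simp: partial_snf_def\<close>)
  ultimately show ?thesis
    using partial t pos dvd unfolding partial_snf_def by (auto simp: less_Suc_eq Suc_le_eq)
qed

lemma partial_snf_is_snf:
  assumes "partial_snf t N"
    and "\<forall>i<dim_row N. \<forall>j<dim_col N. t \<le> i \<and> t \<le> j \<longrightarrow> N $$ (i,j) = 0"
  shows "is_snf N t"
  unfolding is_snf_def
proof (intro conjI allI impI)
  fix i j assume "i < dim_row N" "j < dim_col N" "i \<noteq> j \<or> t \<le> i"
  then show "N $$ (i,j) = 0"
    using assms unfolding partial_snf_def by (cases "t \<le> i \<and> t \<le> j") auto
qed (use assms in \<open>auto simp: partial_snf_def\<close>)

lemma dvd_of_mod_not_smaller:
  fixes d x :: int
  assumes "0 < d" and "x mod d \<noteq> 0 \<Longrightarrow> d \<le> \<bar>x mod d\<bar>"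
  shows "d dvd x"
proof -
  have "x mod d < d" "0 \<le> x mod d" using assms(1) by simp_all
  then show ?thesis using assms(2) by (cases "x mod d = 0") (auto simp: dvd_eq_mod_eq_0)
qed

text \<open>Instead of running the Euclidean algorithm, the pivot is taken of least absolute value
  among the nonzero lower-right entries of all matrices reachable from \<open>N\<close> without destroying
  the invariant. It divides every entry of its row and column, since otherwise a single
  elementary operation would leave a smaller nonzero remainder.\<close>

locale snf_pivot_step =
  fixes N :: "int mat" and t :: nat
  assumes partial: "partial_snf t N"
    and lower_nonzero: "\<exists>i<dim_row N. \<exists>j<dim_col N. t \<le> i \<and> t \<le> j \<and> N $$ (i,j) \<noteq> 0"
begin

definition reach :: "int mat set" where
  "reach = {N'. unimod_equiv N N' \<and> partial_snf t N'}"

definition lower_abs_entries :: "nat set" where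
  "lower_abs_entries = {nat \<bar>N' $$ (i,j)\<bar> | N' i j. N' \<in> reach \<and>
     t \<le> i \<and> i < dim_row N \<and> t \<le> j \<and> j < dim_col N \<and> N' $$ (i,j) \<noteq> 0}"

definition pivot :: int where
  "pivot = int (LEAST x. x \<in> lower_abs_entries)"

lemma t_less_dims: "t < dim_row N" "t < dim_col N"
  using lower_nonzero by auto

lemma reach_dims: "N' \<in> reach \<Longrightarrow> dim_row N' = dim_row N \<and> dim_col N' = dim_col N"
  unfolding reach_def using unimod_equiv_dims by blast

lemma reach_partial_snf: "N' \<in> reach \<Longrightarrow> partial_snf t N'"
  unfolding reach_def by blast

lemma start_in_reach: "N \<in> reach"
  unfolding reach_def using unimod_equiv_refl partial by blast

lemma reach_closed: "N' \<in> reach \<Longrightarrow> unimod_equiv N' N'' \<Longrightarrow> partial_snf t N'' \<Longrightarrow> N'' \<in> reach"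
  unfolding reach_def using unimod_equiv_trans by blast

lemma reach_addrow:
  assumes "N' \<in> reach" "k \<noteq> l" "t \<le> k" "t \<le> l" "k < dim_row N" "l < dim_row N"
  shows "addrow a k l N' \<in> reach"
  by (rule reach_closed[OF assms(1) unimod_equiv_addrow partial_snf_addrow[OF reach_partial_snf[OF assms(1)]]])
    (use assms reach_dims[OF assms(1)] in auto)

lemma reach_swaprows:
  assumes "N' \<in> reach" "t \<le> k" "t \<le> l" "k < dim_row N" "l < dim_row N"
  shows "swaprows k l N' \<in> reach"
  by (rule reach_closed[OF assms(1) unimod_equiv_swaprows partial_snf_swaprows[OF reach_partial_snf[OF assms(1)]]])
    (use assms reach_dims[OF assms(1)] in auto)

lemma reach_multrow_neg_one:
  assumes "N' \<in> reach" "t \<le> k" "k < dim_row N"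
  shows "multrow k (-1) N' \<in> reach"
  by (rule reach_closed[OF assms(1) unimod_equiv_multrow_neg_one partial_snf_multrow[OF reach_partial_snf[OF assms(1)]]])
    (use assms reach_dims[OF assms(1)] in auto)

lemma reach_addcol:
  assumes "N' \<in> reach" "k \<noteq> l" "t \<le> k" "t \<le> l" "k < dim_col N" "l < dim_col N"
  shows "addcol a k l N' \<in> reach"
  by (rule reach_closed[OF assms(1) unimod_equiv_addcol partial_snf_addcol[OF reach_partial_snf[OF assms(1)]]])
    (use assms reach_dims[OF assms(1)] in auto)

lemma reach_swapcols:
  assumes "N' \<in> reach" "t \<le> k" "t \<le> l" "k < dim_col N" "l < dim_col N"
  shows "swapcols k l N' \<in> reach"
  by (rule reach_closed[OF assms(1) unimod_equiv_swapcols partial_snf_swapcols[OF reach_partial_snf[OF assms(1)]]])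
    (use assms reach_dims[OF assms(1)] in auto)

lemma pivot_le:
  assumes "N' \<in> reach" "t \<le> i" "i < dim_row N" "t \<le> j" "j < dim_col N" "N' $$ (i,j) \<noteq> 0"
  shows "pivot \<le> \<bar>N' $$ (i,j)\<bar>"
proof -
  have "nat \<bar>N' $$ (i,j)\<bar> \<in> lower_abs_entries"
    unfolding lower_abs_entries_def using assms by blast
  then have "(LEAST x. x \<in> lower_abs_entries) \<le> nat \<bar>N' $$ (i,j)\<bar>" by (rule Least_le)
  then show ?thesis unfolding pivot_def by simp
qed

lemma pivot_attained:
  obtains N' i j where "N' \<in> reach" "t \<le> i" "i < dim_row N" "t \<le> j" "j < dim_col N"
    "N' $$ (i,j) \<noteq> 0" "\<bar>N' $$ (i,j)\<bar> = pivot"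
proof -
  obtain i j where "i < dim_row N" "j < dim_col N" "t \<le> i" "t \<le> j" "N $$ (i,j) \<noteq> 0"
    using lower_nonzero by blast
  then have "nat \<bar>N $$ (i,j)\<bar> \<in> lower_abs_entries"
    unfolding lower_abs_entries_def using start_in_reach by blast
  then have "(LEAST x. x \<in> lower_abs_entries) \<in> lower_abs_entries" by (rule LeastI)
  then show thesis using that unfolding lower_abs_entries_def pivot_def by auto
qed

lemma pivot_pos: "0 < pivot"
proof -
  obtain N' i j where "N' $$ (i,j) \<noteq> 0" "\<bar>N' $$ (i,j)\<bar> = pivot"
    by (rule pivot_attained)
  then show ?thesis by auto
qed

lemma pivot_on_diagonal:
  obtains N' where "N' \<in> reach" "N' $$ (t,t) = pivot"
proof -
  obtain N1 i j where N1: "N1 \<in> reach" and i: "t \<le> i" "i < dim_row N"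
    and j: "t \<le> j" "j < dim_col N" and abs: "\<bar>N1 $$ (i,j)\<bar> = pivot"
    by (rule pivot_attained)
  define N2 where "N2 = swaprows t i (swapcols t j N1)"
  have "swapcols t j N1 \<in> reach" by (rule reach_swapcols) (use N1 j t_less_dims in auto)
  then have N2: "N2 \<in> reach" unfolding N2_def by (rule reach_swaprows) (use i t_less_dims in auto)
  have N2tt: "N2 $$ (t,t) = N1 $$ (i,j)"
    unfolding N2_def using reach_dims[OF N1] i j t_less_dims by simp
  show thesis
  proof (cases "N2 $$ (t,t) < 0")
    case True
    have "multrow t (-1) N2 \<in> reach" by (rule reach_multrow_neg_one) (use N2 t_less_dims in auto)
    moreover have "multrow t (-1) N2 $$ (t,t) = pivot"
      using True abs N2tt reach_dims[OF N2] t_less_dims by simp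
    ultimately show thesis by (rule that)
  next
    case False
    then show thesis using that N2 abs N2tt by simp
  qed
qed

lemma pivot_dvd_column:
  assumes N': "N' \<in> reach" "N' $$ (t,t) = pivot" and i: "t < i" "i < dim_row N"
  shows "pivot dvd N' $$ (i,t)"
proof (rule dvd_of_mod_not_smaller[OF pivot_pos])
  let ?x = "N' $$ (i,t)"
  let ?N'' = "addrow (-(?x div pivot)) i t N'"
  assume nz: "?x mod pivot \<noteq> 0"
  have "?N'' \<in> reach" by (rule reach_addrow) (use N' i in auto)
  moreover have "?N'' $$ (i,t) = ?x mod pivot"
    using N' i reach_dims[OF N'(1)] t_less_dims
    by (simp add: minus_div_mult_eq_mod[symmetric] algebra_simps)
  ultimately show "pivot \<le> \<bar>?x mod pivot\<bar>"
    using pivot_le[of ?N'' i t] i nz t_less_dims by simp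
qed

lemma pivot_dvd_row:
  assumes N': "N' \<in> reach" "N' $$ (t,t) = pivot" and j: "t < j" "j < dim_col N"
  shows "pivot dvd N' $$ (t,j)"
proof (rule dvd_of_mod_not_smaller[OF pivot_pos])
  let ?x = "N' $$ (t,j)"
  let ?N'' = "addcol (-(?x div pivot)) j t N'"
  assume nz: "?x mod pivot \<noteq> 0"
  have "?N'' \<in> reach" by (rule reach_addcol) (use N' j in auto)
  moreover have "?N'' $$ (t,j) = ?x mod pivot"
    using N' j reach_dims[OF N'(1)] t_less_dims
    by (simp add: minus_div_mult_eq_mod[symmetric] algebra_simps)
  ultimately show "pivot \<le> \<bar>?x mod pivot\<bar>"
    using pivot_le[of ?N'' t j] j nz t_less_dims by simp
qed

lemma clear_column:
  obtains N' where "N' \<in> reach" "N' $$ (t,t) = pivot"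
    "\<And>i. t < i \<Longrightarrow> i < dim_row N \<Longrightarrow> N' $$ (i,t) = 0"
proof -
  have "\<exists>N'\<in>reach. N' $$ (t,t) = pivot \<and> (\<forall>i. t < i \<and> i < s \<and> i < dim_row N \<longrightarrow> N' $$ (i,t) = 0)"
    for s
  proof (induction s)
    case 0
    then show ?case using pivot_on_diagonal by blast
  next
    case (Suc s)
    then obtain N' where N': "N' \<in> reach" "N' $$ (t,t) = pivot"
      and zero: "\<forall>i. t < i \<and> i < s \<and> i < dim_row N \<longrightarrow> N' $$ (i,t) = 0" by blast
    show ?case
    proof (cases "t < s \<and> s < dim_row N")
      case True
      let ?N'' = "addrow (-(N' $$ (s,t) div pivot)) s t N'"
      have "?N'' \<in> reach" by (rule reach_addrow) (use N' True in auto)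
      moreover have "pivot dvd N' $$ (s,t)" using pivot_dvd_column N' True by blast
      ultimately show ?thesis
        using N' zero True reach_dims[OF N'(1)] t_less_dims
        by (intro bexI[of _ ?N'']) (auto simp: less_Suc_eq)
    next
      case False
      then show ?thesis using N' zero by (auto simp: less_Suc_eq)
    qed
  qed
  from this[of "dim_row N"] show thesis by (auto intro: that)
qed

lemma clear_row_and_column:
  obtains N' where "N' \<in> reach" "N' $$ (t,t) = pivot"
    "\<And>i. t < i \<Longrightarrow> i < dim_row N \<Longrightarrow> N' $$ (i,t) = 0"
    "\<And>j. t < j \<Longrightarrow> j < dim_col N \<Longrightarrow> N' $$ (t,j) = 0"
proof -
  have "\<exists>N'\<in>reach. N' $$ (t,t) = pivot \<and> (\<forall>i. t < i \<and> i < dim_row N \<longrightarrow> N' $$ (i,t) = 0) \<and>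
      (\<forall>j. t < j \<and> j < s \<and> j < dim_col N \<longrightarrow> N' $$ (t,j) = 0)" for s
  proof (induction s)
    case 0
    then show ?case using clear_column by (metis not_less0)
  next
    case (Suc s)
    then obtain N' where N': "N' \<in> reach" "N' $$ (t,t) = pivot"
      and col: "\<forall>i. t < i \<and> i < dim_row N \<longrightarrow> N' $$ (i,t) = 0"
      and row: "\<forall>j. t < j \<and> j < s \<and> j < dim_col N \<longrightarrow> N' $$ (t,j) = 0" by blast
    show ?case
    proof (cases "t < s \<and> s < dim_col N")
      case True
      let ?N'' = "addcol (-(N' $$ (t,s) div pivot)) s t N'"
      have "?N'' \<in> reach" by (rule reach_addcol) (use N' True in auto)
      moreover have "pivot dvd N' $$ (t,s)" using pivot_dvd_row N' True by blast
      ultimately show ?thesis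
        using N' col row True reach_dims[OF N'(1)] t_less_dims
        by (intro bexI[of _ ?N'']) (auto simp: less_Suc_eq)
    next
      case False
      then show ?thesis using N' col row by (auto simp: less_Suc_eq)
    qed
  qed
  from this[of "dim_col N"] show thesis by (auto intro: that)
qed

lemma pivot_dvd_lower_block:
  assumes N': "N' \<in> reach" "N' $$ (t,t) = pivot"
    and col: "\<And>i. t < i \<Longrightarrow> i < dim_row N \<Longrightarrow> N' $$ (i,t) = 0"
    and row: "\<And>j. t < j \<Longrightarrow> j < dim_col N \<Longrightarrow> N' $$ (t,j) = 0"
    and ij: "t < i" "i < dim_row N" "t < j" "j < dim_col N"
  shows "pivot dvd N' $$ (i,j)"
proof -
  let ?N'' = "addrow 1 t i N'"
  have "?N'' \<in> reach" by (rule reach_addrow) (use N' ij t_less_dims in auto)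
  moreover have "?N'' $$ (t,t) = pivot"
    using N' col ij reach_dims[OF N'(1)] t_less_dims by simp
  ultimately have "pivot dvd ?N'' $$ (t,j)" using ij by (intro pivot_dvd_row)
  then show ?thesis using row ij reach_dims[OF N'(1)] t_less_dims by simp
qed

lemma partial_snf_extends:
  obtains N' where "unimod_equiv N N'" "partial_snf (Suc t) N'"
proof -
  obtain N' where N': "N' \<in> reach" "N' $$ (t,t) = pivot"
    and col: "\<And>i. t < i \<Longrightarrow> i < dim_row N \<Longrightarrow> N' $$ (i,t) = 0"
    and row: "\<And>j. t < j \<Longrightarrow> j < dim_col N \<Longrightarrow> N' $$ (t,j) = 0"
    using clear_row_and_column by blast
  have "partial_snf (Suc t) N'"
    using reach_partial_snf[OF N'(1)] t_less_dims pivot_pos N' col row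
      pivot_dvd_lower_block[OF N' col row] reach_dims[OF N'(1)]
    by (intro partial_snf_Suc) auto
  moreover have "unimod_equiv N N'" using N'(1) unfolding reach_def by blast
  ultimately show thesis using that by blast
qed

end

lemma partial_snf_imp_snf: "partial_snf t N \<Longrightarrow> \<exists>D r. unimod_equiv N D \<and> is_snf D r"
proof (induction "dim_row N - t" arbitrary: N t rule: less_induct)
  case less
  show ?case
  proof (cases "\<exists>i<dim_row N. \<exists>j<dim_col N. t \<le> i \<and> t \<le> j \<and> N $$ (i,j) \<noteq> 0")
    case True
    then interpret snf_pivot_step N t using less.prems by unfold_locales
    obtain N' where N': "unimod_equiv N N'" "partial_snf (Suc t) N'" by (rule partial_snf_extends)
    have "dim_row N' - Suc t < dim_row N - t" using unimod_equiv_dims[OF N'(1)] t_less_dims by simp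
    then obtain D r where "unimod_equiv N' D" "is_snf D r" using less.hyps N'(2) by blast
    then show ?thesis using unimod_equiv_trans[OF N'(1)] by blast
  next
    case False
    then show ?thesis using partial_snf_is_snf[OF less.prems] unimod_equiv_refl by blast
  qed
qed

lemma snf_decomp_exists: "\<exists>S T r. snf_decomp M S T r"
proof -
  have "partial_snf 0 M" unfolding partial_snf_def by simp
  then obtain D r where "unimod_equiv M D" "is_snf D r" using partial_snf_imp_snf by blast
  then show ?thesis unfolding unimod_equiv_def snf_decomp_def by blast
qed

section \<open>Kernels of reduced Smith forms\<close>

lemma subspace_dim_mat_kernel: "subspace_dim n (mat_kernel A) = kernel.dim n (A :: 'a::field mat)"
  unfolding subspace_dim_def by simp

lemma subspace_dim_carrier_vec: "subspace_dim n (carrier_vec n :: 'a::field vec set) = n"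
proof -
  have "(module_vec TYPE('a) n)\<lparr>carrier := carrier_vec n\<rparr> = module_vec TYPE('a) n"
    by (simp add: module_vec_def)
  then show ?thesis unfolding subspace_dim_def using vec_space.dim_is_n by metis
qed

lemma det_nonzero_imp_inverse:
  assumes "A \<in> carrier_mat n n" "det A \<noteq> (0::'a::field)"
  obtains B where "B \<in> carrier_mat n n" "A * B = 1\<^sub>m n" "B * A = 1\<^sub>m n"
  using det_non_zero_imp_unit[OF assms, of undefined] that
  unfolding Units_def ring_mat_def by auto

lemma kernel_dim_mult_invertible:
  fixes A P Q :: "'a::field mat"
  assumes A: "A \<in> carrier_mat nr nc" and P: "P \<in> carrier_mat nr nr" and Q: "Q \<in> carrier_mat nc nc"
    and "det P \<noteq> 0" "det Q \<noteq> 0"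
  shows "kernel.dim nc (P * A * Q) = kernel.dim nc A"
proof -
  obtain P' where P': "P' \<in> carrier_mat nr nr" "P' * P = 1\<^sub>m nr"
    using det_nonzero_imp_inverse[OF P \<open>det P \<noteq> 0\<close>] by blast
  obtain Q' where Q': "Q' \<in> carrier_mat nc nc" "Q * Q' = 1\<^sub>m nc"
    using det_nonzero_imp_inverse[OF Q \<open>det Q \<noteq> 0\<close>] by blast
  have AQ: "A * Q \<in> carrier_mat nr nc" using A Q by simp
  have "mat_kernel (P * A * Q) = mat_kernel (A * Q)"
    using assoc_mult_mat[OF P A Q] mat_kernel_mult_eq[OF AQ P P'] by simp
  then have "kernel.dim nc (P * A * Q) = kernel.dim nc (A * Q)"
    by (simp flip: subspace_dim_mat_kernel)
  also have "\<dots> = kernel.dim nc A" by (rule mat_kernel_dim_mult_eq_right[OF A Q Q'])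
  finally show ?thesis .
qed

lemma diag_mult_vec_eq_zero_iff:
  fixes A :: "'a::field mat"
  assumes A: "A \<in> carrier_mat k l" and r: "r \<le> k" "r \<le> l"
    and entries: "\<And>i j. i < k \<Longrightarrow> j < l \<Longrightarrow> A $$ (i,j) = (if i = j \<and> i < r then c i else 0)"
    and v: "v \<in> carrier_vec l"
  shows "A *\<^sub>v v = 0\<^sub>v k \<longleftrightarrow> (\<forall>i<r. c i * v $ i = 0)"
proof -
  have entry: "(A *\<^sub>v v) $ i = (if i < r then c i * v $ i else 0)" if i: "i < k" for i
  proof -
    have "(A *\<^sub>v v) $ i = (\<Sum>j\<in>{0..<l}. A $$ (i,j) * v $ j)"
      using A v i by (simp add: scalar_prod_def)
    also have "\<dots> = (\<Sum>j\<in>{0..<l}. if j = i then (if i < r then c i * v $ i else 0) else 0)"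
      by (rule sum.cong) (use i entries in auto)
    also have "\<dots> = (if i < r then c i * v $ i else 0)"
      using r i by (cases "i < r") (auto simp: sum.delta)
    finally show ?thesis .
  qed
  show ?thesis
  proof
    assume zero: "A *\<^sub>v v = 0\<^sub>v k"
    show "\<forall>i<r. c i * v $ i = 0"
    proof (intro allI impI)
      fix i assume "i < r"
      then show "c i * v $ i = 0" using entry[of i] zero r by simp
    qed
  next
    assume "\<forall>i<r. c i * v $ i = 0"
    then show "A *\<^sub>v v = 0\<^sub>v k" by (intro eq_vecI) (use A entry in auto)
  qed
qed

lemma kernel_dim_unit_diag:
  assumes "s \<le> k" "s \<le> l"
  shows "kernel.dim l (mat k l (\<lambda>(i,j). if i = j \<and> i < s then 1 else 0) :: 'a::field mat) = l - s"
proof -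
  define E :: "'a mat" where "E = mat k l (\<lambda>(i,j). if i = j \<and> i < s then 1 else 0)"
  have E: "E \<in> carrier_mat k l" unfolding E_def by simp
  have ref: "row_echelon_form E"
    unfolding row_echelon_form_def
  proof (intro exI[of _ "\<lambda>i. if i < s then i else l"] pivot_funI)
    show "dim_row E = k" using E by simp
  qed (use assms in \<open>auto simp: E_def split: if_splits\<close>)
  have "row E i \<noteq> 0\<^sub>v l \<longleftrightarrow> i < s" if "i < k" for i
  proof
    assume nz: "row E i \<noteq> 0\<^sub>v l"
    show "i < s"
    proof (rule ccontr)
      assume "\<not> i < s"
      then have "row E i = 0\<^sub>v l" using that E by (intro eq_vecI) (auto simp: E_def)
      with nz show False ..
    qed
  next
    assume "i < s"
    then have "row E i $ i = 1" using assms by (simp add: E_def)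
    then show "row E i \<noteq> 0\<^sub>v l" using \<open>i < s\<close> assms by auto
  qed
  then have "{i. i < k \<and> row E i \<noteq> 0\<^sub>v l} = {i. i < k \<and> i < s}" by blast
  also have "\<dots> = {..<s}" using assms(1) by auto
  finally have "{i. i < k \<and> row E i \<noteq> 0\<^sub>v l} = {..<s}" .
  then show ?thesis using find_base_vectors(6)[OF ref E] unfolding E_def by simp
qed

lemma kernel_dim_diag:
  fixes A :: "'a::field mat"
  assumes A: "A \<in> carrier_mat k l" and r: "s \<le> r" "r \<le> k" "r \<le> l"
    and entries: "\<And>i j. i < k \<Longrightarrow> j < l \<Longrightarrow> A $$ (i,j) = (if i = j \<and> i < r then c i else 0)"
    and nonzero: "\<And>i. i < r \<Longrightarrow> c i \<noteq> 0 \<longleftrightarrow> i < s"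
  shows "kernel.dim l A = l - s"
proof -
  define E :: "'a mat" where "E = mat k l (\<lambda>(i,j). if i = j \<and> i < s then 1 else 0)"
  have E: "E \<in> carrier_mat k l" unfolding E_def by simp
  have "A *\<^sub>v v = 0\<^sub>v k \<longleftrightarrow> E *\<^sub>v v = 0\<^sub>v k" if v: "v \<in> carrier_vec l" for v
  proof -
    have "A *\<^sub>v v = 0\<^sub>v k \<longleftrightarrow> (\<forall>i<r. c i * v $ i = 0)"
      by (rule diag_mult_vec_eq_zero_iff[OF A r(2,3) entries v])
    also have "\<dots> \<longleftrightarrow> (\<forall>i<s. v $ i = 0)"
    proof (intro iffI allI impI)
      fix i assume zero: "\<forall>i<r. c i * v $ i = 0" and "i < s"
      then have "i < r" using r(1) by simp
      then have "c i * v $ i = 0" "c i \<noteq> 0" using zero nonzero[of i] \<open>i < s\<close> by auto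
      then show "v $ i = 0" by simp
    next
      fix i assume "\<forall>i<s. v $ i = 0" "i < r"
      then show "c i * v $ i = 0" using nonzero by (cases "i < s") auto
    qed
    also have "\<dots> \<longleftrightarrow> E *\<^sub>v v = 0\<^sub>v k"
      using diag_mult_vec_eq_zero_iff[OF E _ _ _ v, of s "\<lambda>_. 1"] r by (simp add: E_def)
    finally show ?thesis .
  qed
  then have "mat_kernel A = mat_kernel E" unfolding mat_kernel[OF A] mat_kernel[OF E] by blast
  then show ?thesis using kernel_dim_unit_diag[of s k l] r unfolding E_def
    by (simp flip: subspace_dim_mat_kernel)
qed

lemma kernel_dim_transpose_snf:
  fixes M S T :: "int mat"
  assumes M: "M \<in> carrier_mat l k" and snf: "snf_decomp M S T r" and "s \<le> r"
    and nonzero: "\<And>i. i < r \<Longrightarrow> of_int ((S * M * T) $$ (i,i)) \<noteq> (0::'a::field) \<longleftrightarrow> i < s"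
  shows "kernel.dim l (transpose_mat (map_mat (of_int :: int \<Rightarrow> 'a) M)) = l - s"
proof -
  define D where "D = S * M * T"
  let ?h = "map_mat (of_int :: int \<Rightarrow> 'a)"
  have S: "S \<in> carrier_mat l l" "det S = 1 \<or> det S = -1"
    and T: "T \<in> carrier_mat k k" "det T = 1 \<or> det T = -1"
    and snfD: "is_snf D r" using snf M unfolding snf_decomp_def unimodular_def D_def by auto
  have D: "D \<in> carrier_mat l k" using S T M by (simp add: D_def)
  have r: "r \<le> l" "r \<le> k" using snfD D unfolding is_snf_def by auto
  have "?h D = ?h S * ?h M * ?h T"
    unfolding D_def of_int_hom.mat_hom_mult[OF mult_carrier_mat[OF S(1) M] T(1)]
      of_int_hom.mat_hom_mult[OF S(1) M] ..
  then have tr: "transpose_mat (?h D) =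
      transpose_mat (?h T) * transpose_mat (?h M) * transpose_mat (?h S)"
    using S(1) M T(1) by (simp add: transpose_mult[of _ l k _ k] transpose_mult[of _ l l _ k]
        assoc_mult_mat[of _ k k _ l _ l])
  have "det (transpose_mat (?h T)) = of_int (det T)" "det (transpose_mat (?h S)) = of_int (det S)"
    using det_transpose[of "?h T" k] det_transpose[of "?h S" l] S(1) T(1)
    by (simp_all add: of_int_hom.hom_det)
  then have "det (transpose_mat (?h T)) \<noteq> 0" "det (transpose_mat (?h S)) \<noteq> 0"
    using S(2) T(2) by auto
  then have "kernel.dim l (transpose_mat (?h D)) = kernel.dim l (transpose_mat (?h M))"
    unfolding tr using S(1) T(1) M by (intro kernel_dim_mult_invertible[of _ k l]) simp_all
  moreover have "kernel.dim l (transpose_mat (?h D)) = l - s"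
  proof (rule kernel_dim_diag[OF _ \<open>s \<le> r\<close> r(2,1)])
    show "transpose_mat (?h D) \<in> carrier_mat k l" using D by simp
    show "transpose_mat (?h D) $$ (i,j) = (if i = j \<and> i < r then of_int (D $$ (i,i)) else 0)"
      if "i < k" "j < l" for i j
    proof -
      have "D $$ (j,i) = 0" if "i \<noteq> j \<or> r \<le> i"
        using snfD \<open>i < k\<close> \<open>j < l\<close> that D unfolding is_snf_def by auto
      then show ?thesis using \<open>i < k\<close> \<open>j < l\<close> D by (cases "i = j") auto
    qed
    show "of_int (D $$ (i,i)) \<noteq> (0::'a) \<longleftrightarrow> i < s" if "i < r" for i
      using nonzero[OF that] unfolding D_def .
  qed
  ultimately show ?thesis by simp
qed

lemma is_snf_diag_dvd:
  assumes "is_snf D r" "i \<le> j" "j < r"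
  shows "D $$ (i,i) dvd D $$ (j,j)"
  using assms(2,3)
proof (induction j)
  case (Suc j)
  show ?case
  proof (cases "i = Suc j")
    case False
    then have "D $$ (i,i) dvd D $$ (j,j)" using Suc by simp
    also have "D $$ (j,j) dvd D $$ (Suc j, Suc j)"
      using assms(1) Suc.prems unfolding is_snf_def by blast
    finally show ?thesis .
  qed simp
qed simp

lemma of_int_eq_0_if_dvd: "a dvd b \<Longrightarrow> of_int a = (0::'a::comm_ring_1) \<Longrightarrow> of_int b = (0::'a)"
  by (elim dvdE) simp

lemma kernel_dim_transpose_snf_ge:
  fixes M S T :: "int mat"
  assumes M: "M \<in> carrier_mat l k" and snf: "snf_decomp M S T r"
  shows "l - r \<le> kernel.dim l (transpose_mat (map_mat (of_int :: int \<Rightarrow> 'a::field) M))"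
proof -
  let ?d = "\<lambda>i. of_int ((S * M * T) $$ (i,i)) :: 'a"
  have snfD: "is_snf (S * M * T) r" using snf unfolding snf_decomp_def by blast
  define s where "s = (LEAST i. i = r \<or> ?d i = 0)"
  have "s \<le> r" unfolding s_def by (rule Least_le) simp
  have "?d i \<noteq> 0 \<longleftrightarrow> i < s" if "i < r" for i
  proof
    assume nz: "?d i \<noteq> 0"
    show "i < s"
    proof (rule ccontr)
      assume "\<not> i < s"
      have "s = r \<or> ?d s = 0" unfolding s_def by (rule LeastI[of _ r]) simp
      then have "?d s = 0" using \<open>\<not> i < s\<close> that by auto
      moreover have "(S * M * T) $$ (s,s) dvd (S * M * T) $$ (i,i)"
        using is_snf_diag_dvd[OF snfD _ that] \<open>\<not> i < s\<close> by simp
      ultimately have "?d i = 0" by (simp add: of_int_eq_0_if_dvd)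
      with nz show False ..
    qed
  next
    assume "i < s"
    then show "?d i \<noteq> 0" using not_less_Least[of i "\<lambda>i. i = r \<or> ?d i = 0"] that
      unfolding s_def by auto
  qed
  then have "kernel.dim l (transpose_mat (map_mat (of_int :: int \<Rightarrow> 'a) M)) = l - s"
    by (rule kernel_dim_transpose_snf[OF M snf \<open>s \<le> r\<close>])
  then show ?thesis using \<open>s \<le> r\<close> by simp
qed

lemma kernel_dim_transpose_snf_eq:
  fixes M S T :: "int mat"
  assumes M: "M \<in> carrier_mat l k" and snf: "snf_decomp M S T r"
    and last: "0 < r \<Longrightarrow> of_int ((S * M * T) $$ (r - 1, r - 1)) \<noteq> (0::'a::field)"
  shows "kernel.dim l (transpose_mat (map_mat (of_int :: int \<Rightarrow> 'a) M)) = l - r"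
proof (rule kernel_dim_transpose_snf[OF M snf order_refl])
  fix i assume "i < r"
  have "is_snf (S * M * T) r" using snf unfolding snf_decomp_def by blast
  then have dvd: "(S * M * T) $$ (i,i) dvd (S * M * T) $$ (r - 1, r - 1)"
    using \<open>i < r\<close> by (intro is_snf_diag_dvd) auto
  have "of_int ((S * M * T) $$ (i,i)) \<noteq> (0::'a)"
  proof
    assume "of_int ((S * M * T) $$ (i,i)) = (0::'a)"
    with dvd have "of_int ((S * M * T) $$ (r - 1, r - 1)) = (0::'a)" by (rule of_int_eq_0_if_dvd)
    with last \<open>i < r\<close> show False by simp
  qed
  then show "of_int ((S * M * T) $$ (i,i)) \<noteq> (0::'a) \<longleftrightarrow> i < r" using \<open>i < r\<close> by simp
qed

lemma kernel_dim_transpose_snf_char_0: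
  fixes M S T :: "int mat"
  assumes M: "M \<in> carrier_mat l k" and snf: "snf_decomp M S T r"
  shows "kernel.dim l (transpose_mat (map_mat (of_int :: int \<Rightarrow> 'a::{field,ring_char_0}) M)) = l - r"
proof (rule kernel_dim_transpose_snf_eq[OF M snf])
  assume "0 < r"
  then have "0 < (S * M * T) $$ (r - 1, r - 1)"
    using snf unfolding snf_decomp_def is_snf_def by simp
  then show "of_int ((S * M * T) $$ (r - 1, r - 1)) \<noteq> (0::'a)" by simp
qed

lemma mat_kernel_submodule:
  assumes "A \<in> carrier_mat nr nc"
  shows "submodule class_ring (mat_kernel A) (module_vec TYPE('a::field) nc)"
proof -
  interpret kernel nr nc A by unfold_locales (rule assms)
  show ?thesis
    by unfold_locales
      (use assms mult_add_distrib_mat_vec[OF assms] mult_mat_vec[OF assms] mat_kernel[OF assms]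
        in \<open>auto simp: class_ring_simps\<close>)
qed

lemma kernel_dim_mono:
  fixes A B :: "'a::field mat"
  assumes A: "A \<in> carrier_mat na l" and B: "B \<in> carrier_mat nb l"
    and sub: "mat_kernel A \<subseteq> mat_kernel B"
  shows "kernel.dim l A \<le> kernel.dim l B"
    and "kernel.dim l A = kernel.dim l B \<Longrightarrow> mat_kernel A = mat_kernel B"
proof -
  interpret KA: kernel na l A by unfold_locales (rule A)
  interpret KB: kernel nb l B by unfold_locales (rule B)
  obtain bA where finA: "finite bA" and basA: "KA.basis bA" using kernel_basis_exists[OF A] by blast
  obtain bB where finB: "finite bB" and basB: "KB.basis bB" using kernel_basis_exists[OF B] by blast
  have dimA: "KA.dim = card bA" by (rule KA.Ker.dim_basis[OF finA basA])
  have bAA: "bA \<subseteq> mat_kernel A" and liA: "\<not> KA.lin_dep bA" and genA: "KA.span bA = mat_kernel A"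
    using basA unfolding KA.Ker.basis_def by auto
  have bAB: "bA \<subseteq> mat_kernel B" using bAA sub by blast
  note smA = mat_kernel_submodule[OF A] and smB = mat_kernel_submodule[OF B]
  have liB: "\<not> KB.lin_dep bA"
    using liA KA.NC.span_li_not_depend(2)[OF bAA smA] KA.NC.span_li_not_depend(2)[OF bAB smB]
    by simp
  have fdB: "KB.Ker.fin_dim"
    unfolding KB.Ker.fin_dim_def using finB basB unfolding KB.Ker.basis_def by blast
  show le: "kernel.dim l A \<le> kernel.dim l B"
    using KB.Ker.li_le_dim(2)[OF fdB _ liB] bAB dimA by simp
  assume eq: "kernel.dim l A = kernel.dim l B"
  have "KB.basis bA" by (rule KB.Ker.dim_li_is_basis[OF fdB finA _ liB]) (use bAB eq dimA in auto)
  then have "KB.span bA = mat_kernel B" unfolding KB.Ker.basis_def by auto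
  moreover have "KB.span bA = KA.span bA"
    using KA.NC.span_li_not_depend(1)[OF bAA smA] KA.NC.span_li_not_depend(1)[OF bAB smB] by simp
  ultimately show "mat_kernel A = mat_kernel B" using genA by simp
qed

section \<open>Flats of the arrangement\<close>

definition flat :: "int mat \<Rightarrow> nat set \<Rightarrow> 'a::field vec set" where
  "flat C J = {x \<in> carrier_vec (dim_row C). \<forall>i\<in>J. lin_form C i x = 0}"

lemma Inter_hyperplane_eq_flat: "J \<noteq> {} \<Longrightarrow> (\<Inter>i\<in>J. hyperplane C i) = flat C J"
  unfolding hyperplane_def flat_def by auto

lemma flat_empty: "flat C {} = carrier_vec (dim_row C)"
  by (simp add: flat_def)

lemma flat_insert: "flat C (insert a J) = flat C J \<inter> hyperplane C a"
  by (auto simp: flat_def hyperplane_def)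

lemma sub_cols_carrier: "sub_cols C J \<in> carrier_mat (dim_row C) (card J)"
  by (simp add: sub_cols_def)

lemma flat_eq_mat_kernel:
  assumes J: "finite J"
  shows "flat C J = mat_kernel (transpose_mat (map_mat (of_int :: int \<Rightarrow> 'a::field) (sub_cols C J)))"
proof -
  define A :: "'a mat" where "A = transpose_mat (map_mat of_int (sub_cols C J))"
  define \<sigma> where "\<sigma> = (\<lambda>j. sorted_list_of_set J ! j)"
  have A: "A \<in> carrier_mat (card J) (dim_row C)" unfolding A_def sub_cols_def by simp
  have entry: "(A *\<^sub>v v) $ j = lin_form C (\<sigma> j) v" if "j < card J" "v \<in> carrier_vec (dim_row C)" for j v
    using that unfolding A_def sub_cols_def lin_form_def \<sigma>_def
    by (simp add: scalar_prod_def lessThan_atLeast0)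
  have all_J: "(\<forall>j<card J. P (\<sigma> j)) \<longleftrightarrow> (\<forall>i\<in>J. P i)" for P
    using J unfolding \<sigma>_def by (metis in_set_conv_nth sorted_list_of_set.length_sorted_key_list_of_set
        sorted_list_of_set.set_sorted_key_list_of_set)
  have "v \<in> flat C J \<longleftrightarrow> v \<in> mat_kernel A" if v: "v \<in> carrier_vec (dim_row C)" for v
  proof -
    have "A *\<^sub>v v = 0\<^sub>v (card J) \<longleftrightarrow> (\<forall>j<card J. (A *\<^sub>v v) $ j = 0)"
      using A by (auto simp: vec_eq_iff)
    also have "\<dots> \<longleftrightarrow> (\<forall>i\<in>J. lin_form C i v = 0)" using entry v all_J by simp
    finally show ?thesis unfolding flat_def mat_kernel[OF A] using v by simp
  qed
  then show ?thesis
    unfolding A_def[symmetric] flat_def mat_kernel[OF A] by blast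
qed

lemma subspace_dim_flat_antimono:
  assumes "finite J'" "J \<subseteq> J'"
  shows "subspace_dim (dim_row C) (flat C J' :: 'a::field vec set) \<le>
      subspace_dim (dim_row C) (flat C J :: 'a vec set)"
    and "subspace_dim (dim_row C) (flat C J' :: 'a vec set) =
      subspace_dim (dim_row C) (flat C J :: 'a vec set) \<Longrightarrow> flat C J' = (flat C J :: 'a vec set)"
proof -
  have "finite J" using assms finite_subset by blast
  let ?A = "\<lambda>J. transpose_mat (map_mat (of_int :: int \<Rightarrow> 'a) (sub_cols C J))"
  have carrier: "?A I \<in> carrier_mat (card I) (dim_row C)" for I by (simp add: sub_cols_def)
  have "flat C J' \<subseteq> (flat C J :: 'a vec set)" using assms(2) unfolding flat_def by auto
  then have "mat_kernel (?A J') \<subseteq> mat_kernel (?A J)"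
    by (simp add: flat_eq_mat_kernel[OF assms(1)] flat_eq_mat_kernel[OF \<open>finite J\<close>])
  note mono = kernel_dim_mono[OF carrier carrier this]
  show "subspace_dim (dim_row C) (flat C J' :: 'a vec set) \<le>
      subspace_dim (dim_row C) (flat C J :: 'a vec set)"
    using mono(1) by (simp add: flat_eq_mat_kernel[OF assms(1)] flat_eq_mat_kernel[OF \<open>finite J\<close>]
        subspace_dim_mat_kernel)
  show "flat C J' = (flat C J :: 'a vec set)"
    if "subspace_dim (dim_row C) (flat C J' :: 'a vec set) =
      subspace_dim (dim_row C) (flat C J :: 'a vec set)"
    using that mono(2) by (simp add: flat_eq_mat_kernel[OF assms(1)]
        flat_eq_mat_kernel[OF \<open>finite J\<close>] subspace_dim_mat_kernel)
qed

lemma subspace_dim_flat_snf_ge: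
  assumes "finite J" "snf_decomp (sub_cols C J) S T r"
  shows "dim_row C - r \<le> subspace_dim (dim_row C) (flat C J :: 'a::field vec set)"
  using kernel_dim_transpose_snf_ge[OF sub_cols_carrier assms(2)]
  by (simp add: flat_eq_mat_kernel[OF assms(1)] subspace_dim_mat_kernel)

lemma subspace_dim_flat_snf_eq:
  assumes "finite J" "snf_decomp (sub_cols C J) S T r"
    and "0 < r \<Longrightarrow> of_int ((S * sub_cols C J * T) $$ (r - 1, r - 1)) \<noteq> (0::'a::field)"
  shows "subspace_dim (dim_row C) (flat C J :: 'a vec set) = dim_row C - r"
  using kernel_dim_transpose_snf_eq[OF sub_cols_carrier assms(2,3)]
  by (simp add: flat_eq_mat_kernel[OF assms(1)] subspace_dim_mat_kernel)

lemma subspace_dim_flat_snf_char_0: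
  assumes "finite J" "snf_decomp (sub_cols C J) S T r"
  shows "subspace_dim (dim_row C) (flat C J :: 'a::{field,ring_char_0} vec set) = dim_row C - r"
  using kernel_dim_transpose_snf_char_0[OF sub_cols_carrier assms(2)]
  by (simp add: flat_eq_mat_kernel[OF assms(1)] subspace_dim_mat_kernel)

lemma subspace_dim_flat_char_0_le:
  assumes "finite J"
  shows "subspace_dim (dim_row C) (flat C J :: 'a::{field,ring_char_0} vec set) \<le>
    subspace_dim (dim_row C) (flat C J :: 'b::field vec set)"
proof -
  obtain S T r where snf: "snf_decomp (sub_cols C J) S T r" using snf_decomp_exists by blast
  show ?thesis
    using subspace_dim_flat_snf_char_0[OF assms snf, where 'a='a]
      subspace_dim_flat_snf_ge[OF assms snf, where 'a='b] by simp
qed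

lemma eJ_spec:
  assumes "snf_decomp (sub_cols C J) S T r" "0 < r"
  obtains S' T' r' where "snf_decomp (sub_cols C J) S' T' r'" "0 < r'"
    "eJ C J = (S' * sub_cols C J * T') $$ (r' - 1, r' - 1)"
proof -
  have "\<exists>e S T r. snf_decomp (sub_cols C J) S T r \<and> 0 < r \<and>
      e = (S * sub_cols C J * T) $$ (r - 1, r - 1)"
    using assms by blast
  then have "\<exists>S T r. snf_decomp (sub_cols C J) S T r \<and> 0 < r \<and>
      eJ C J = (S * sub_cols C J * T) $$ (r - 1, r - 1)"
    unfolding eJ_def by (rule someI_ex)
  then show thesis using that by blast
qed

text \<open>Since the invariant factors of \<open>C\<^sub>J\<close> all divide \<open>e(J)\<close>, none of them
  vanishes in a field in which \<open>e(J)\<close> does not, so the rank of \<open>C\<^sub>J\<close> is the same there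
  as over \<open>\<rat>\<close>.\<close>

lemma subspace_dim_flat_eq_if_eJ_nonzero:
  assumes J: "finite J"
    and proper: "subspace_dim (dim_row C) (flat C J :: 'a::{field,ring_char_0} vec set) < dim_row C"
    and eJ: "of_int (eJ C J) \<noteq> (0::'b::field)"
  shows "subspace_dim (dim_row C) (flat C J :: 'b vec set) =
    subspace_dim (dim_row C) (flat C J :: 'a vec set)"
proof -
  obtain S T r where snf: "snf_decomp (sub_cols C J) S T r" using snf_decomp_exists by blast
  have "0 < r" using subspace_dim_flat_snf_char_0[OF J snf, where 'a='a] proper by simp
  then obtain S' T' r' where snf': "snf_decomp (sub_cols C J) S' T' r'"
    and e: "eJ C J = (S' * sub_cols C J * T') $$ (r' - 1, r' - 1)"
    by (rule eJ_spec[OF snf])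
  have "subspace_dim (dim_row C) (flat C J :: 'b vec set) = dim_row C - r'"
    by (rule subspace_dim_flat_snf_eq[OF J snf']) (use eJ e in simp)
  also have "\<dots> = subspace_dim (dim_row C) (flat C J :: 'a vec set)"
    using subspace_dim_flat_snf_char_0[OF J snf', where 'a='a] by simp
  finally show ?thesis .
qed

lemma exists_irredundant_subfamily:
  assumes "finite J"
  obtains J' where "J' \<subseteq> J" "(flat C J' :: 'a::field vec set) = flat C J"
    "\<And>a. a \<in> J' \<Longrightarrow> (flat C (J' - {a}) :: 'a vec set) \<noteq> flat C J'"
proof -
  let ?P = "\<lambda>I. I \<subseteq> J \<and> (flat C I :: 'a vec set) = flat C J"
  obtain J' where J': "?P J'" and least: "\<And>I. ?P I \<Longrightarrow> card J' \<le> card I"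
    using ex_has_least_nat[of ?P J card] by blast
  have "finite J'" using J' assms finite_subset by blast
  have "(flat C (J' - {a}) :: 'a vec set) \<noteq> flat C J'" if "a \<in> J'" for a
  proof
    assume "(flat C (J' - {a}) :: 'a vec set) = flat C J'"
    then have "card J' \<le> card (J' - {a})" using J' by (intro least) auto
    with card_Diff1_less[OF \<open>finite J'\<close> that] show False by simp
  qed
  then show thesis using that J' by blast
qed

text \<open>Each hyperplane of an irredundant family lowers the dimension of the flat.\<close>

lemma subspace_dim_flat_add_card_le:
  assumes "finite I"
    and "\<And>a. a \<in> I \<Longrightarrow> (flat C (I - {a}) :: 'a::field vec set) \<noteq> flat C I"
  shows "subspace_dim (dim_row C) (flat C I :: 'a vec set) + card I \<le> dim_row C"
  using assms
proof (induction I rule: finite_induct)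
  case empty
  then show ?case by (simp add: flat_empty subspace_dim_carrier_vec)
next
  case (insert a I)
  have "(flat C (I - {b}) :: 'a vec set) \<noteq> flat C I" if "b \<in> I" for b
  proof
    assume "(flat C (I - {b}) :: 'a vec set) = flat C I"
    moreover have "insert a I - {b} = insert a (I - {b})" using insert.hyps(2) that by auto
    ultimately have "(flat C (insert a I - {b}) :: 'a vec set) = flat C (insert a I)"
      by (simp add: flat_insert)
    with insert.prems[of b] that show False by simp
  qed
  then have IH: "subspace_dim (dim_row C) (flat C I :: 'a vec set) + card I \<le> dim_row C"
    by (rule insert.IH)
  have "(flat C (insert a I) :: 'a vec set) \<noteq> flat C I"
    using insert.prems[of a] insert.hyps(2) by simp
  then have "subspace_dim (dim_row C) (flat C (insert a I) :: 'a vec set) <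
      subspace_dim (dim_row C) (flat C I :: 'a vec set)"
    using subspace_dim_flat_antimono[of "insert a I" I C] insert.hyps(1)
    by (meson finite_insert le_neq_implies_less subset_insertI)
  then show ?case using IH insert.hyps by simp
qed

lemma subspace_dim_flat_eq_rat:
  fixes C :: "int mat"
  assumes J: "J \<subseteq> {..<dim_col C}" and rho0: "of_int (rho0 C) \<noteq> (0::'a::field)"
  shows "subspace_dim (dim_row C) (flat C J :: 'a vec set) =
    subspace_dim (dim_row C) (flat C J :: rat vec set)"
proof -
  have "finite J" using J finite_subset by blast
  obtain J' where J': "J' \<subseteq> J" "(flat C J' :: rat vec set) = flat C J"
    and irredundant: "\<And>a. a \<in> J' \<Longrightarrow> (flat C (J' - {a}) :: rat vec set) \<noteq> flat C J'"
    using exists_irredundant_subfamily[OF \<open>finite J\<close>, where C=C and 'a=rat] by blast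
  have "finite J'" using J'(1) \<open>finite J\<close> finite_subset by blast
  have "subspace_dim (dim_row C) (flat C J :: 'a vec set) \<le>
      subspace_dim (dim_row C) (flat C J' :: 'a vec set)"
    by (rule subspace_dim_flat_antimono(1)[OF \<open>finite J\<close> J'(1)])
  also have "\<dots> = subspace_dim (dim_row C) (flat C J' :: rat vec set)"
  proof (cases "J' = {}")
    case True
    then show ?thesis by (simp add: flat_empty subspace_dim_carrier_vec)
  next
    case False
    have card: "subspace_dim (dim_row C) (flat C J' :: rat vec set) + card J' \<le> dim_row C"
      by (rule subspace_dim_flat_add_card_le[OF \<open>finite J'\<close> irredundant])
    moreover have "0 < card J'" using False \<open>finite J'\<close> by (simp add: card_gt_0_iff)
    ultimately have "J' \<subseteq> {..<dim_col C}" "1 \<le> card J'" "card J' \<le> dim_row C"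
      using J J'(1) by auto
    then have "eJ C J' \<in>
        {eJ C I | I. I \<subseteq> {..<dim_col C} \<and> 1 \<le> card I \<and> card I \<le> dim_row C}"
      by blast
    then have "eJ C J' dvd rho0 C" unfolding rho0_def by (rule dvd_Lcm)
    then have "of_int (eJ C J') \<noteq> (0::'a)" using rho0 of_int_eq_0_if_dvd by metis
    then show ?thesis
      using subspace_dim_flat_eq_if_eJ_nonzero[OF \<open>finite J'\<close>, where 'a=rat and 'b='a]
        card \<open>0 < card J'\<close> by simp
  qed
  also have "\<dots> = subspace_dim (dim_row C) (flat C J :: rat vec set)" using J'(2) by simp
  finally show ?thesis
    using subspace_dim_flat_char_0_le[OF \<open>finite J\<close>, where C=C and 'b='a and 'a=rat] by simp
qed

lemma of_int_mod_ring_neq_0_if_coprime: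
  assumes "coprime (int CARD('p::prime_card)) x"
  shows "of_int x \<noteq> (0::'p mod_ring)"
proof
  assume "of_int x = (0::'p mod_ring)"
  then have "int CARD('p) dvd x" by (simp add: of_int_eq_0_iff_char_dvd)
  then have "is_unit (int CARD('p))" using assms coprime_absorb_left by blast
  moreover have "CARD('p) > 1" using prime_card[where 'a='p] prime_gt_1_nat by blast
  ultimately show False by simp
qed

theorem corollary7p3:
  fixes C :: "int mat" and l n :: nat
  assumes dims: "C \<in> carrier_mat l n"
    and primitive: "\<forall>i<n. \<not> (\<exists>q::int. prime q \<and> (\<forall>k<l. q dvd C $$ (k, i)))"
    and distinct: "\<forall>i<n. \<forall>j<n. i \<noteq> j \<longrightarrow>
                      (hyperplane C i :: rat vec set) \<noteq> hyperplane C j"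
    and essential: "(\<Inter>i\<in>{..<n}. (hyperplane C i :: rat vec set)) = {0\<^sub>v l}"
    and p_large: "CARD('p::prime_card) > q0 C"
    and p_coprime: "coprime (int CARD('p)) (rho0 C)"
  shows "comb_equiv l n (hyperplane C :: nat \<Rightarrow> rat vec set)
                        (hyperplane C :: nat \<Rightarrow> 'p mod_ring vec set)"
proof -
  \<comment> \<open>Besides \<open>dims\<close>, only \<open>p_coprime\<close> is needed.\<close>
  have "dim_row C = l" "dim_col C = n" using dims by auto
  moreover have "of_int (rho0 C) \<noteq> (0::'p mod_ring)"
    using p_coprime by (rule of_int_mod_ring_neq_0_if_coprime)
  ultimately show ?thesis
    unfolding comb_equiv_def
    using subspace_dim_flat_eq_rat[of _ C, where 'a="'p mod_ring"]
    by (simp add: Inter_hyperplane_eq_flat)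
qed

end
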